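(* There is a universal constant $\varkappa>0$ such that the following holds. Let $\bar d\ge1$, $d=2\bar d$, let $\chi$ be a probability distribution on $[0,1]^{\bar d}$, and let $D$ be a database of $n$ i.i.d. samples from $\chi$. Let $\bar f^A_\chi(\mathbf{q})=f^S_\chi(\mathbf{q})/f^C_\chi(\mathbf{q})$ and $f^A_D(\mathbf{q})=f^S_D(\mathbf{q})/f^C_D(\mathbf{q})$, and define $\operatorname{err}(\mathbf{q})=\frac{|\bar f^A_\chi(\mathbf{q})-f^A_D(\mathbf{q})|}{|\bar f^A_\chi(\mathbf{q})|+1}$. For $\xi\in(0,1]$ let $\mathcal{Q}_\xi=\{\mathbf{q}\in\mathcal{Q}: \frac1n f^C_\chi(\mathbf{q})\ge\xi\}$. Then for every $\varepsilon>0$, $$\mathbb{P}_{D\sim\chi}\Big[\sup_{\mathbf{q}\in\mathcal{Q}_\xi}\operatorname{err}(\mathbf{q})\ge\varepsilon\Big]\le\varkappa^{d+1}d\Big(\frac{1+\varepsilon}{\xi\varepsilon}\Big)^d\exp\!\Big(-\varkappa^{-1}\Big(\frac{\xi\varepsilon}{1+\varepsilon}\Big)^2 n\Big).$$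
   Context: A query is $\mathbf{q}=(\mathbf{c},\mathbf{r})$ with $\mathbf{c},\mathbf{r}\in[0,1]^{\bar d}$, ranging over $\mathcal{Q}=\{(\mathbf{c},\mathbf{r})\in[0,1]^d: c_j+r_j\le1\ \forall j\}$. A point $\mathbf{p}$ matches $\mathbf{q}$ if $c_j\le p_j<c_j+r_j$ for all $j$. Fix a measure attribute index $m$. $f^C_D(\mathbf{q})$ is the number of points of $D$ matching $\mathbf{q}$, $f^S_D(\mathbf{q})=\sum_{\mathbf{p}\in D\text{ matching }\mathbf{q}}p_m$, and $f^i_\chi(\mathbf{q})=\mathbb{E}_{D\sim\chi}[f^i_D(\mathbf{q})]$ for $i\in\{S,C\}$ (so $\frac1n f^C_\chi(\mathbf{q})$ is the probability that a sample from $\chi$ matches $\mathbf{q}$). *)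

theory Defs
  imports "HOL-Probability.Probability"
begin

type_synonym point = "nat \<Rightarrow> real"
type_synonym query = "point \<times> point"

definition queries :: "nat \<Rightarrow> query set" where
  "queries db = {(c, r). c \<in> PiE {..<db} (\<lambda>_. {0..1}) \<and> r \<in> PiE {..<db} (\<lambda>_. {0..1})
                  \<and> (\<forall>j<db. c j + r j \<le> 1)}"

definition matches :: "nat \<Rightarrow> point \<Rightarrow> query \<Rightarrow> bool" where
  "matches db p q \<longleftrightarrow> (\<forall>j<db. fst q j \<le> p j \<and> p j < fst q j + snd q j)"

text \<open>A database of n points is a map {..<n} -> points (multiset of samples).\<close>

definition fC_D :: "nat \<Rightarrow> nat \<Rightarrow> (nat \<Rightarrow> point) \<Rightarrow> query \<Rightarrow> real" where
  "fC_D db n D q = real (card {i. i < n \<and> matches db (D i) q})"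

definition fS_D :: "nat \<Rightarrow> nat \<Rightarrow> nat \<Rightarrow> (nat \<Rightarrow> point) \<Rightarrow> query \<Rightarrow> real" where
  "fS_D db m n D q = (\<Sum>i | i < n \<and> matches db (D i) q. D i m)"

definition db_measure :: "nat \<Rightarrow> point measure \<Rightarrow> (nat \<Rightarrow> point) measure" where
  "db_measure n chi = PiM {..<n} (\<lambda>_. chi)"

definition fC_chi :: "nat \<Rightarrow> nat \<Rightarrow> point measure \<Rightarrow> query \<Rightarrow> real" where
  "fC_chi db n chi q = (\<integral>D. fC_D db n D q \<partial>(db_measure n chi))"

definition fS_chi :: "nat \<Rightarrow> nat \<Rightarrow> nat \<Rightarrow> point measure \<Rightarrow> query \<Rightarrow> real" where
  "fS_chi db m n chi q = (\<integral>D. fS_D db m n D q \<partial>(db_measure n chi))"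

definition fA_chi :: "nat \<Rightarrow> nat \<Rightarrow> nat \<Rightarrow> point measure \<Rightarrow> query \<Rightarrow> real" where
  "fA_chi db m n chi q = fS_chi db m n chi q / fC_chi db n chi q"

definition fA_D :: "nat \<Rightarrow> nat \<Rightarrow> nat \<Rightarrow> (nat \<Rightarrow> point) \<Rightarrow> query \<Rightarrow> real" where
  "fA_D db m n D q = fS_D db m n D q / fC_D db n D q"

definition err :: "nat \<Rightarrow> nat \<Rightarrow> nat \<Rightarrow> point measure \<Rightarrow> (nat \<Rightarrow> point) \<Rightarrow> query \<Rightarrow> real" where
  "err db m n chi D q = \<bar>fA_chi db m n chi q - fA_D db m n D q\<bar> / (\<bar>fA_chi db m n chi q\<bar> + 1)"

definition queries_xi :: "nat \<Rightarrow> nat \<Rightarrow> point measure \<Rightarrow> real \<Rightarrow> query set" where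
  "queries_xi db n chi xi = {q \<in> queries db. fC_chi db n chi q / real n \<ge> xi}"

text \<open>Outer probability: the event need not be shown measurable; we bound it by a
  measurable superset.\<close>

definition outer_prob_le :: "'a measure \<Rightarrow> 'a set \<Rightarrow> real \<Rightarrow> bool" where
  "outer_prob_le M E b \<longleftrightarrow> (\<exists>A \<in> sets M. E \<subseteq> A \<and> measure M A \<le> b)"

end

(*
  The relative error of the empirical average is at most eps / 2 as soon as the empirical count
  f^C_D and sum f^S_D deviate from their means by less than n t / 4, where t = xi eps / (1 + eps).
  Both are sums over the sample of the [0,1]-valued functions 1_q and p_m 1_q, and since every box
  is a pointwise limit of boxes with rational corners, it suffices to bound these deviations
  uniformly over a countable family. This is the Vapnik-Chervonenkis argument: a ghost sample and
  Hoeffding's inequality reduce the deviation from the mean to the deviation between the two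
  halves of a sample of size 2n; swapping the halves at random turns the latter into a Rademacher
  sum, bounded by a Chernoff estimate, while boxes cut out at most
  2 sum_{i <= 2 dbar} (2n choose i) <= 2 (e 2n / d)^d different subsets of 2n points, each being
  the trace of the bounding box of at most 2 dbar of them. The resulting bound
  8 (e 2n / d)^d exp (- n t^2 / 128) is dominated by the claimed one with kappa = 1024 whenever
  the latter is below 1.
*)
theory Submission
  imports Defs
begin

section \<open>Sign-flip sums\<close>

lemma cosh_le_exp_half_square:
  fixes x :: real
  shows "cosh x \<le> exp (x\<^sup>2 / 2)"
proof -
  have *: "cosh y \<le> exp (y\<^sup>2 / 2)" if "y \<ge> 0" for y :: real
  proof -
    have pos: "cosh y > 0" by (simp add: cosh_def add_pos_pos)
    \<comment> \<open>Hoeffding's lemma for a fair sign: with p = 1/2 its auxiliary inequality reads ln (cosh y) <= y^2/2.\<close>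
    have "- (2 * y) * (1 / 2) + ln (1 + (1 / 2) * (exp (2 * y) - 1)) \<le> (2 * y)\<^sup>2 / 8"
      using Hoeffdings_lemma_aux[of "2 * y" "1 / 2"] that by simp
    moreover have "1 + (1 / 2) * (exp (2 * y) - 1) = exp y * cosh y"
      by (simp add: cosh_def exp_minus field_simps flip: exp_add)
    ultimately have "ln (cosh y) \<le> y\<^sup>2 / 2"
      using pos by (simp add: ln_mult power2_eq_square)
    then show ?thesis
      using pos by (metis exp_le_cancel_iff exp_ln)
  qed
  show ?thesis
    using *[of "\<bar>x\<bar>"] by simp
qed

lemma sum_exp_sign_flips_le:
  fixes b :: "'i \<Rightarrow> real"
  assumes I: "finite I" and b: "\<And>i. i \<in> I \<Longrightarrow> \<bar>b i\<bar> \<le> 1"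
  shows "(\<Sum>S\<in>Pow I. exp (l * (\<Sum>i\<in>I. if i \<in> S then - b i else b i))) \<le> (2 * exp (l\<^sup>2 / 2)) ^ card I"
proof -
  have exp_sum: "exp (l * (\<Sum>i\<in>I. if i \<in> S then - b i else b i))
      = (\<Prod>i\<in>S. exp (- l * b i)) * (\<Prod>i\<in>I - S. exp (l * b i))" if "S \<in> Pow I" for S
  proof -
    have "exp (l * (\<Sum>i\<in>I. if i \<in> S then - b i else b i))
        = (\<Prod>i\<in>I. if i \<in> S then exp (- l * b i) else exp (l * b i))"
      by (auto simp: sum_distrib_left exp_sum I if_distrib intro!: prod.cong)
    also have "\<dots> = (\<Prod>i\<in>I \<inter> S. exp (- l * b i)) * (\<Prod>i\<in>I - S. exp (l * b i))"
      by (simp add: prod.If_cases I Diff_eq)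
    also have "I \<inter> S = S"
      using that by auto
    finally show ?thesis .
  qed
  have "(\<Sum>S\<in>Pow I. exp (l * (\<Sum>i\<in>I. if i \<in> S then - b i else b i)))
      = (\<Prod>i\<in>I. exp (- l * b i) + exp (l * b i))"
    by (simp add: prod_add I exp_sum)
  also have "\<dots> = (\<Prod>i\<in>I. 2 * cosh (l * b i))"
    by (auto simp: cosh_def intro!: prod.cong)
  also have "\<dots> \<le> (\<Prod>i\<in>I. 2 * exp (l\<^sup>2 / 2))"
  proof (intro prod_mono conjI)
    fix i assume "i \<in> I"
    then have "(l * b i)\<^sup>2 \<le> l\<^sup>2"
      using b by (simp add: power_mult_distrib abs_square_le_1 mult_left_le)
    then have "exp ((l * b i)\<^sup>2 / 2) \<le> exp (l\<^sup>2 / 2)"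
      by simp
    then show "2 * cosh (l * b i) \<le> 2 * exp (l\<^sup>2 / 2)"
      using cosh_le_exp_half_square[of "l * b i"] by linarith
  qed (simp add: cosh_def add_nonneg_nonneg)
  finally show ?thesis
    by simp
qed

lemma card_sign_flips_ge:
  fixes b :: "'i \<Rightarrow> real"
  assumes I: "finite I" "I \<noteq> {}" and b: "\<And>i. i \<in> I \<Longrightarrow> \<bar>b i\<bar> \<le> 1" and r: "r \<ge> 0"
  shows "real (card {S \<in> Pow I. (\<Sum>i\<in>I. if i \<in> S then - b i else b i) \<ge> r})
           \<le> 2 ^ card I * exp (- r\<^sup>2 / (2 * real (card I)))"
proof -
  define N where "N = real (card I)"
  have N: "N > 0" using I by (simp add: N_def card_gt_0_iff)
  define l where "l = r / N"
  have l: "l \<ge> 0" using r N by (simp add: l_def)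
  let ?s = "\<lambda>S. \<Sum>i\<in>I. if i \<in> S then - b i else b i"
  have "real (card {S \<in> Pow I. ?s S \<ge> r}) = (\<Sum>S\<in>Pow I. if ?s S \<ge> r then 1 else 0)"
    by (simp add: sum.If_cases I(1) Int_def)
  also have "\<dots> \<le> (\<Sum>S\<in>Pow I. exp (l * (?s S - r)))"
    by (intro sum_mono) (use l in \<open>auto simp: zero_le_mult_iff\<close>)
  also have "\<dots> = exp (- l * r) * (\<Sum>S\<in>Pow I. exp (l * ?s S))"
    by (simp add: sum_distrib_left right_diff_distrib exp_diff exp_minus field_simps)
  also have "\<dots> \<le> exp (- l * r) * (2 * exp (l\<^sup>2 / 2)) ^ card I"
    using sum_exp_sign_flips_le[OF I(1) b] by simp
  also have "\<dots> = 2 ^ card I * exp (- l * r + N * (l\<^sup>2 / 2))"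
    unfolding N_def exp_add exp_of_nat_mult by (simp add: power_mult_distrib)
  also have "- l * r + N * (l\<^sup>2 / 2) = - r\<^sup>2 / (2 * N)"
    using N by (simp add: l_def field_simps power2_eq_square)
  finally show ?thesis
    unfolding N_def .
qed

lemma card_sign_flips_abs_ge:
  fixes b :: "'i \<Rightarrow> real"
  assumes I: "finite I" "I \<noteq> {}" and b: "\<And>i. i \<in> I \<Longrightarrow> \<bar>b i\<bar> \<le> 1" and r: "r \<ge> 0"
  shows "real (card {S \<in> Pow I. \<bar>\<Sum>i\<in>I. if i \<in> S then - b i else b i\<bar> \<ge> r})
           \<le> 2 * 2 ^ card I * exp (- r\<^sup>2 / (2 * real (card I)))"
proof -
  let ?s = "\<lambda>b S. \<Sum>i\<in>I. if i \<in> S then - b i else (b i :: real)"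
  have neg: "?s (\<lambda>i. - b i) S = - ?s b S" for S
    by (simp add: sum_negf[symmetric] if_distrib cong: if_cong)
  have "{S \<in> Pow I. \<bar>?s b S\<bar> \<ge> r} \<subseteq> {S \<in> Pow I. ?s b S \<ge> r} \<union> {S \<in> Pow I. ?s (\<lambda>i. - b i) S \<ge> r}"
    unfolding neg by auto
  then have "card {S \<in> Pow I. \<bar>?s b S\<bar> \<ge> r}
      \<le> card ({S \<in> Pow I. ?s b S \<ge> r} \<union> {S \<in> Pow I. ?s (\<lambda>i. - b i) S \<ge> r})"
    by (rule card_mono[rotated]) (simp add: I(1))
  also have "\<dots> \<le> card {S \<in> Pow I. ?s b S \<ge> r} + card {S \<in> Pow I. ?s (\<lambda>i. - b i) S \<ge> r}"
    by (rule card_Un_le)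
  finally have "real (card {S \<in> Pow I. \<bar>?s b S\<bar> \<ge> r})
      \<le> real (card {S \<in> Pow I. ?s b S \<ge> r}) + real (card {S \<in> Pow I. ?s (\<lambda>i. - b i) S \<ge> r})"
    by linarith
  also have "\<dots> \<le> 2 ^ card I * exp (- r\<^sup>2 / (2 * real (card I))) + 2 ^ card I * exp (- r\<^sup>2 / (2 * real (card I)))"
    by (intro add_mono card_sign_flips_ge) (use assms in auto)
  finally show ?thesis by simp
qed

lemma integral_PiM_component:
  fixes g :: "'a \<Rightarrow> real"
  assumes M: "prob_space M" and g: "g \<in> borel_measurable M" and i: "i \<in> J"
  shows "(\<integral>D. g (D i) \<partial>PiM J (\<lambda>_. M)) = (\<integral>x. g x \<partial>M)"
proof -
  have "(\<integral>D. g (D i) \<partial>PiM J (\<lambda>_. M)) = (\<integral>x. g x \<partial>distr (PiM J (\<lambda>_. M)) M (\<lambda>D. D i))"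
    using integral_distr[OF measurable_component_singleton[OF i, of "\<lambda>_. M"] g] by simp
  also have "\<dots> = (\<integral>x. g x \<partial>M)"
    using distr_PiM_component[of J "\<lambda>_. M" i] i M by simp
  finally show ?thesis .
qed

lemma integral_PiM_sum_components:
  fixes g :: "'a \<Rightarrow> real"
  assumes M: "prob_space M" and g: "integrable M g" and J: "finite J"
  shows "(\<integral>D. (\<Sum>i\<in>J. g (D i)) \<partial>PiM J (\<lambda>_. M)) = real (card J) * (\<integral>x. g x \<partial>M)"
proof -
  have "integrable (PiM J (\<lambda>_. M)) (\<lambda>D. g (D i))" if i: "i \<in> J" for i
  proof -
    have "integrable (distr (PiM J (\<lambda>_. M)) M (\<lambda>D. D i)) g"
      using distr_PiM_component[of J "\<lambda>_. M" i] i g M by simp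
    then show ?thesis
      by (subst (asm) integrable_distr_eq) (use i g in auto)
  qed
  then have "(\<integral>D. (\<Sum>i\<in>J. g (D i)) \<partial>PiM J (\<lambda>_. M)) = (\<Sum>i\<in>J. \<integral>D. g (D i) \<partial>PiM J (\<lambda>_. M))"
    by (rule Bochner_Integration.integral_sum)
  also have "\<dots> = (\<Sum>i\<in>J. \<integral>x. g x \<partial>M)"
    by (intro sum.cong refl integral_PiM_component[OF M borel_measurable_integrable[OF g]])
  finally show ?thesis by simp
qed

lemma indep_vars_PiM_components:
  assumes M: "prob_space M" and J: "J \<noteq> {}"
  shows "prob_space.indep_vars (PiM J (\<lambda>_. M)) (\<lambda>_. M) (\<lambda>j D. D j) J"
proof -
  interpret P: prob_space "PiM J (\<lambda>_. M)"
    using M by (intro prob_space_PiM) auto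
  have "distr (PiM J (\<lambda>_. M)) (PiM J (\<lambda>_. M)) (\<lambda>D. \<lambda>j\<in>J. D j)
      = distr (PiM J (\<lambda>_. M)) (PiM J (\<lambda>_. M)) (\<lambda>D. D)"
    by (rule distr_cong) (auto simp: space_PiM PiE_def extensional_restrict)
  also have "\<dots> = PiM J (\<lambda>j. distr (PiM J (\<lambda>_. M)) M (\<lambda>D. D j))"
    using distr_PiM_component[of J "\<lambda>_. M"] M by (auto intro!: PiM_cong)
  finally show ?thesis
    using J by (subst P.indep_vars_iff_distr_eq_PiM') auto
qed

lemma prob_PiM_sum_deviation_ge:
  fixes g :: "'a \<Rightarrow> real"
  assumes M: "prob_space M" and g: "g \<in> borel_measurable M"
    and g_bounds: "\<And>x. x \<in> space M \<Longrightarrow> 0 \<le> g x \<and> g x \<le> 1"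
    and J: "finite J" "J \<noteq> {}" and r: "r \<ge> 0"
  shows "measure (PiM J (\<lambda>_. M)) {D \<in> space (PiM J (\<lambda>_. M)).
           \<bar>(\<Sum>j\<in>J. g (D j)) - real (card J) * (\<integral>x. g x \<partial>M)\<bar> \<ge> r}
         \<le> 2 * exp (- 2 * r\<^sup>2 / real (card J))"
proof -
  interpret P: prob_space "PiM J (\<lambda>_. M)"
    using M by (intro prob_space_PiM) auto
  have "P.indep_vars (\<lambda>_. borel) (\<lambda>j D. g (D j)) J"
    using P.indep_vars_compose2[OF indep_vars_PiM_components[OF M J(2)], of "\<lambda>_. g" "\<lambda>_. borel"] g
    by simp
  then interpret H: Hoeffding_ineq "PiM J (\<lambda>_. M)" J "\<lambda>j D. g (D j)" "\<lambda>_. 0" "\<lambda>_. 1"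
      "\<Sum>j\<in>J. P.expectation (\<lambda>D. g (D j))"
    using J g_bounds M by unfold_locales (auto intro!: AE_PiM_component)
  have "(\<Sum>j\<in>J. P.expectation (\<lambda>D. g (D j))) = real (card J) * (\<integral>x. g x \<partial>M)"
    by (simp add: sum.cong[OF refl integral_PiM_component[OF M g]])
  then show ?thesis
    using H.Hoeffding_ineq_abs_ge[of r] r J by (simp add: card_gt_0_iff)
qed

section \<open>Symmetrization\<close>

lemma sets_PiM_merge_section:
  assumes "x \<in> space (PiM I M)" and "B \<in> sets (PiM (I \<union> J) M)"
  shows "{y \<in> space (PiM J M). merge I J (x, y) \<in> B} \<in> sets (PiM J M)"
  using assms by measurable

lemma measure_PiM_merge_sections_ge:
  fixes M :: "'i \<Rightarrow> 'a measure"
  assumes M: "\<And>i. prob_space (M i)" and IJ: "I \<inter> J = {}" "finite I" "finite J"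
    and A: "A \<in> sets (PiM I M)" and B: "B \<in> sets (PiM (I \<union> J) M)" and c: "c \<ge> 0"
    and sections: "\<And>x. x \<in> A \<Longrightarrow> c \<le> measure (PiM J M) {y \<in> space (PiM J M). merge I J (x, y) \<in> B}"
  shows "c * measure (PiM I M) A \<le> measure (PiM (I \<union> J) M) B"
proof -
  interpret product_sigma_finite M
    using M by (simp add: product_sigma_finite_def prob_space_imp_sigma_finite)
  have emeasure_PiM: "emeasure (PiM K M) X = ennreal (measure (PiM K M) X)" for K X
    using prob_space_PiM[of K M] M
    by (simp add: prob_space_def finite_measure.emeasure_eq_measure)
  have "ennreal c * emeasure (PiM I M) A = (\<integral>\<^sup>+x. ennreal c * indicator A x \<partial>PiM I M)"
    using A by (simp add: nn_integral_cmult)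
  also have "\<dots> \<le> (\<integral>\<^sup>+x. (\<integral>\<^sup>+y. indicator B (merge I J (x, y)) \<partial>PiM J M) \<partial>PiM I M)"
  proof (rule nn_integral_mono)
    fix x assume x: "x \<in> space (PiM I M)"
    have "(\<integral>\<^sup>+y. indicator B (merge I J (x, y)) \<partial>PiM J M)
        = emeasure (PiM J M) {y \<in> space (PiM J M). merge I J (x, y) \<in> B}"
      by (subst nn_integral_indicator[OF sets_PiM_merge_section[OF x B], symmetric])
         (auto intro!: nn_integral_cong simp: indicator_def)
    then show "ennreal c * indicator A x \<le> (\<integral>\<^sup>+y. indicator B (merge I J (x, y)) \<partial>PiM J M)"
      using sections[of x] by (auto simp: indicator_def emeasure_PiM ennreal_leI)
  qed
  also have "\<dots> = emeasure (PiM (I \<union> J) M) B"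
    using product_nn_integral_fold[OF IJ, of "indicator B"] B by simp
  finally show ?thesis
    using c by (simp add: emeasure_PiM ennreal_mult[symmetric])
qed

lemma sum_upper_half:
  fixes f :: "nat \<Rightarrow> 'b::comm_monoid_add"
  shows "(\<Sum>j\<in>{n..<2 * n}. f j) = (\<Sum>i<n. f (n + i))"
  using sum.shift_bounds_nat_ivl[of f 0 n n] by (simp add: mult_2 atLeast0LessThan add.commute)

lemma ghost_sample_deviation_ge:
  fixes M :: "'a measure" and g :: "'a \<Rightarrow> real"
  assumes M: "prob_space M" and g: "g \<in> borel_measurable M"
    and g_bounds: "\<And>x. x \<in> space M \<Longrightarrow> 0 \<le> g x \<and> g x \<le> 1"
    and n: "n > 0" and s: "s \<ge> 0" and ghost: "2 * exp (- real n * s\<^sup>2 / 2) \<le> 1 / 2"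
    and dev: "real n * s \<le> \<bar>a - real n * (\<integral>x. g x \<partial>M)\<bar>"
  shows "1 / 2 \<le> measure (PiM {n..<2 * n} (\<lambda>_. M))
    {D' \<in> space (PiM {n..<2 * n} (\<lambda>_. M)). real n * s / 2 \<le> \<bar>a - (\<Sum>j\<in>{n..<2 * n}. g (D' j))\<bar>}"
proof -
  let ?J = "{n..<2 * n}"
  interpret PJ: prob_space "PiM ?J (\<lambda>_. M)"
    using M by (intro prob_space_PiM) auto
  have [measurable]: "(\<lambda>D. g (D j)) \<in> borel_measurable (PiM ?J (\<lambda>_. M))" if "j \<in> ?J" for j
    by (rule measurable_compose[OF measurable_component_singleton[OF that] g])
  define Bad where "Bad = {D' \<in> space (PiM ?J (\<lambda>_. M)).
    real n * s / 2 \<le> \<bar>(\<Sum>j\<in>?J. g (D' j)) - real (card ?J) * (\<integral>x. g x \<partial>M)\<bar>}"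
  have "PJ.prob Bad \<le> 2 * exp (- 2 * (real n * s / 2)\<^sup>2 / real (card ?J))"
    unfolding Bad_def using n g_bounds s by (intro prob_PiM_sum_deviation_ge[OF M g]) auto
  also have "- 2 * (real n * s / 2)\<^sup>2 / real (card ?J) = - real n * s\<^sup>2 / 2"
    using n by (simp add: power2_eq_square field_simps)
  finally have "1 / 2 \<le> PJ.prob (space (PiM ?J (\<lambda>_. M)) - Bad)"
    using ghost by (simp add: PJ.prob_compl Bad_def)
  also have "\<dots> \<le> PJ.prob {D' \<in> space (PiM ?J (\<lambda>_. M)). real n * s / 2 \<le> \<bar>a - (\<Sum>j\<in>?J. g (D' j))\<bar>}"
  proof (rule PJ.finite_measure_mono[OF subsetI])
    show "{D' \<in> space (PiM ?J (\<lambda>_. M)). real n * s / 2 \<le> \<bar>a - (\<Sum>j\<in>?J. g (D' j))\<bar>} \<in> PJ.events"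
      by measurable
  next
    fix D' assume "D' \<in> space (PiM ?J (\<lambda>_. M)) - Bad"
    then have "D' \<in> space (PiM ?J (\<lambda>_. M))"
      and "\<bar>(\<Sum>j\<in>?J. g (D' j)) - real n * (\<integral>x. g x \<partial>M)\<bar> < real n * s / 2"
      by (auto simp: Bad_def)
    moreover have "real n * s / 2 \<le> \<bar>a - (\<Sum>j\<in>?J. g (D' j))\<bar>"
      using calculation(2) dev by linarith
    ultimately show "D' \<in> {D' \<in> space (PiM ?J (\<lambda>_. M)). real n * s / 2 \<le> \<bar>a - (\<Sum>j\<in>?J. g (D' j))\<bar>}"
      by blast
  qed
  finally show ?thesis .
qed

lemma symmetrization:
  fixes M :: "'a measure" and G :: "'k::countable \<Rightarrow> 'a \<Rightarrow> real"
  assumes M: "prob_space M" and G: "\<And>k. G k \<in> borel_measurable M"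
    and G_bounds: "\<And>k x. x \<in> space M \<Longrightarrow> 0 \<le> G k x \<and> G k x \<le> 1"
    and n: "n > 0" and s: "s \<ge> 0" and ghost: "2 * exp (- real n * s\<^sup>2 / 2) \<le> 1 / 2"
  shows "measure (PiM {..<n} (\<lambda>_. M)) {D \<in> space (PiM {..<n} (\<lambda>_. M)).
             \<exists>k. \<bar>(\<Sum>i<n. G k (D i)) - real n * (\<integral>x. G k x \<partial>M)\<bar> \<ge> real n * s}
         \<le> 2 * measure (PiM {..<2 * n} (\<lambda>_. M)) {Z \<in> space (PiM {..<2 * n} (\<lambda>_. M)).
             \<exists>k. \<bar>(\<Sum>i<n. G k (Z i)) - (\<Sum>i<n. G k (Z (n + i)))\<bar> \<ge> real n * s / 2}"
    (is "measure _ ?A \<le> 2 * measure _ ?B")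
proof -
  let ?I = "{..<n}" and ?J = "{n..<2 * n}"
  have IJ: "?I \<union> ?J = {..<2 * n}" by auto
  have [measurable]: "(\<lambda>D. G k (D i)) \<in> borel_measurable (PiM K (\<lambda>_. M))" if "i \<in> K" for k i K
    by (rule measurable_compose[OF measurable_component_singleton[OF that] G])
  have B_sets: "?B \<in> sets (PiM (?I \<union> ?J) (\<lambda>_. M))"
    unfolding IJ by measurable
  have "1 / 2 * measure (PiM ?I (\<lambda>_. M)) ?A \<le> measure (PiM (?I \<union> ?J) (\<lambda>_. M)) ?B"
  proof (rule measure_PiM_merge_sections_ge[OF M _ _ _ _ B_sets])
    show "?A \<in> sets (PiM ?I (\<lambda>_. M))"
      by measurable
    fix D assume "D \<in> ?A"
    then obtain k where D: "D \<in> space (PiM ?I (\<lambda>_. M))"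
      and k: "real n * s \<le> \<bar>(\<Sum>i<n. G k (D i)) - real n * (\<integral>x. G k x \<partial>M)\<bar>"
      by blast
    have "1 / 2 \<le> measure (PiM ?J (\<lambda>_. M)) {D' \<in> space (PiM ?J (\<lambda>_. M)).
        real n * s / 2 \<le> \<bar>(\<Sum>i<n. G k (D i)) - (\<Sum>j\<in>?J. G k (D' j))\<bar>}"
      by (rule ghost_sample_deviation_ge[OF M G _ n s ghost k]) (use G_bounds in auto)
    also have "\<dots> \<le> measure (PiM ?J (\<lambda>_. M)) {D' \<in> space (PiM ?J (\<lambda>_. M)). merge ?I ?J (D, D') \<in> ?B}"
    proof (rule finite_measure.finite_measure_mono[OF _ subsetI])
      show "finite_measure (PiM ?J (\<lambda>_. M))"
        using prob_space_PiM[of ?J "\<lambda>_. M"] M by (simp add: prob_space_def)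
      show "{D' \<in> space (PiM ?J (\<lambda>_. M)). merge ?I ?J (D, D') \<in> ?B} \<in> sets (PiM ?J (\<lambda>_. M))"
        using D B_sets by (rule sets_PiM_merge_section)
    next
      fix D' assume D': "D' \<in> {D' \<in> space (PiM ?J (\<lambda>_. M)).
        real n * s / 2 \<le> \<bar>(\<Sum>i<n. G k (D i)) - (\<Sum>j\<in>?J. G k (D' j))\<bar>}"
      have "merge ?I ?J (D, D') \<in> space (PiM {..<2 * n} (\<lambda>_. M))"
        using measurable_space[OF measurable_merge, of "(D, D')" ?I "\<lambda>_. M" ?J] D D'
        unfolding IJ by (simp add: space_pair_measure)
      moreover have "(\<Sum>i<n. G k (merge ?I ?J (D, D') i)) = (\<Sum>i<n. G k (D i))"
        by (rule sum.cong) (auto simp: merge_def)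
      moreover have "(\<Sum>i<n. G k (merge ?I ?J (D, D') (n + i))) = (\<Sum>j\<in>?J. G k (D' j))"
        unfolding sum_upper_half by (rule sum.cong) (auto simp: merge_def)
      ultimately show "D' \<in> {D' \<in> space (PiM ?J (\<lambda>_. M)). merge ?I ?J (D, D') \<in> ?B}"
        using D' by (auto intro!: exI[of _ k])
    qed
    finally show "1 / 2 \<le> measure (PiM ?J (\<lambda>_. M))
        {D' \<in> space (PiM ?J (\<lambda>_. M)). merge ?I ?J (D, D') \<in> ?B}" .
  qed auto
  then show ?thesis
    unfolding IJ by simp
qed

section \<open>Uniform deviation bound\<close>

definition swap_pairs :: "nat \<Rightarrow> nat set \<Rightarrow> nat \<Rightarrow> nat" where
  "swap_pairs n S j = (if j \<in> S then n + j else if n \<le> j \<and> j - n \<in> S then j - n else j)"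

lemma swap_pairs_swap_pairs: "S \<subseteq> {..<n} \<Longrightarrow> swap_pairs n S (swap_pairs n S j) = j"
  by (auto simp: swap_pairs_def)

lemma swap_pairs_less: "S \<subseteq> {..<n} \<Longrightarrow> j < 2 * n \<Longrightarrow> swap_pairs n S j < 2 * n"
  by (auto simp: swap_pairs_def)

lemma swap_pairs_measurable:
  "S \<subseteq> {..<n} \<Longrightarrow> (\<lambda>Z. \<lambda>j\<in>{..<2 * n}. Z (swap_pairs n S j)) \<in> PiM {..<2 * n} (\<lambda>_. M) \<rightarrow>\<^sub>M PiM {..<2 * n} (\<lambda>_. M)"
  by (intro measurable_restrict measurable_component_singleton) (simp add: swap_pairs_less)

lemma distr_PiM_swap_pairs:
  assumes M: "prob_space M" and S: "S \<subseteq> {..<n}"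
  shows "distr (PiM {..<2 * n} (\<lambda>_. M)) (PiM {..<2 * n} (\<lambda>_. M)) (\<lambda>Z. \<lambda>j\<in>{..<2 * n}. Z (swap_pairs n S j))
    = PiM {..<2 * n} (\<lambda>_. M)"
proof -
  have "inj_on (swap_pairs n S) {..<2 * n}"
    by (metis inj_onI swap_pairs_swap_pairs[OF S])
  then show ?thesis
    using distr_PiM_reindex[of "{..<2 * n}" "\<lambda>_. M" "swap_pairs n S" "{..<2 * n}"] M S
    by (simp add: swap_pairs_less)
qed

lemma (in prob_space) card_mult_prob_le_of_invariant:
  fixes \<sigma> :: "'i \<Rightarrow> 'a \<Rightarrow> 'a"
  assumes F: "finite F" and \<sigma>: "\<And>S. S \<in> F \<Longrightarrow> \<sigma> S \<in> M \<rightarrow>\<^sub>M M" "\<And>S. S \<in> F \<Longrightarrow> distr M M (\<sigma> S) = M"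
    and B: "B \<in> events" and count: "\<And>x. x \<in> space M \<Longrightarrow> real (card {S \<in> F. \<sigma> S x \<in> B}) \<le> C"
  shows "real (card F) * prob B \<le> C"
proof -
  have preimage: "\<sigma> S -` B \<inter> space M \<in> events" if "S \<in> F" for S
    using measurable_sets[OF \<sigma>(1)[OF that] B] .
  have "real (card F) * prob B = (\<Sum>S\<in>F. prob B)"
    by simp
  also have "\<dots> = (\<Sum>S\<in>F. prob (\<sigma> S -` B \<inter> space M))"
    using measure_distr[OF \<sigma>(1) B] \<sigma>(2) by (intro sum.cong) auto
  also have "\<dots> = (\<Sum>S\<in>F. \<integral>x. indicator (\<sigma> S -` B \<inter> space M) x \<partial>M)"
    using preimage by simp
  also have "\<dots> = (\<integral>x. (\<Sum>S\<in>F. indicator (\<sigma> S -` B \<inter> space M) x) \<partial>M)"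
    using preimage by (intro Bochner_Integration.integral_sum[symmetric])
      (auto intro!: integrable_real_indicator simp: emeasure_eq_measure)
  also have "\<dots> \<le> C"
  proof (rule integral_le_const)
    show "integrable M (\<lambda>x. \<Sum>S\<in>F. indicator (\<sigma> S -` B \<inter> space M) x :: real)"
      using preimage by (auto intro!: integrable_real_indicator simp: emeasure_eq_measure)
    have "(\<Sum>S\<in>F. indicator (\<sigma> S -` B \<inter> space M) x) = real (card {S \<in> F. \<sigma> S x \<in> B})"
      if "x \<in> space M" for x
      using that F by (simp add: indicator_def sum.If_cases Int_def)
    then show "AE x in M. (\<Sum>S\<in>F. indicator (\<sigma> S -` B \<inter> space M) x) \<le> C"
      using count by (intro AE_I2) simp
  qed
  finally show ?thesis .
qed

definition sample_traces :: "('k \<Rightarrow> 'a \<Rightarrow> real) \<Rightarrow> nat \<Rightarrow> (nat \<Rightarrow> 'a) \<Rightarrow> (nat \<Rightarrow> real) set" where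
  "sample_traces G N Z = (\<lambda>k. \<lambda>j\<in>{..<N}. G k (Z j)) ` UNIV"

text \<open>Swapping the pairs in \<open>S\<close> flips the signs of the pair differences of the trace of
  \<open>G k\<close>, so the count is bounded by sign-flip counts, one for each of the finitely many traces.\<close>

lemma card_swaps_deviation_ge:
  fixes G :: "'k \<Rightarrow> 'a \<Rightarrow> real"
  assumes n: "n > 0" and r: "r \<ge> 0" and fin: "finite (sample_traces G (2 * n) Z)"
    and G_bounds: "\<And>k j. j < 2 * n \<Longrightarrow> 0 \<le> G k (Z j) \<and> G k (Z j) \<le> 1"
  shows "real (card {S \<in> Pow {..<n}. \<exists>k. r \<le> \<bar>(\<Sum>i<n. G k (Z (swap_pairs n S i)))
             - (\<Sum>i<n. G k (Z (swap_pairs n S (n + i))))\<bar>})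
         \<le> real (card (sample_traces G (2 * n) Z)) * (2 * 2 ^ n * exp (- r\<^sup>2 / (2 * real n)))"
proof -
  define T where "T a = {S \<in> Pow {..<n}.
    r \<le> \<bar>\<Sum>i<n. if i \<in> S then - (a i - a (n + i)) else a i - a (n + i)\<bar>}" for a :: "nat \<Rightarrow> real"
  have "{S \<in> Pow {..<n}. \<exists>k. r \<le> \<bar>(\<Sum>i<n. G k (Z (swap_pairs n S i)))
             - (\<Sum>i<n. G k (Z (swap_pairs n S (n + i))))\<bar>} \<subseteq> (\<Union>a\<in>sample_traces G (2 * n) Z. T a)"
  proof safe
    fix S k assume S: "S \<subseteq> {..<n}"
      and k: "r \<le> \<bar>(\<Sum>i<n. G k (Z (swap_pairs n S i))) - (\<Sum>i<n. G k (Z (swap_pairs n S (n + i))))\<bar>"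
    define a where "a = (\<lambda>j\<in>{..<2 * n}. G k (Z j))"
    have "(\<Sum>i<n. G k (Z (swap_pairs n S i))) - (\<Sum>i<n. G k (Z (swap_pairs n S (n + i))))
        = (\<Sum>i<n. if i \<in> S then - (a i - a (n + i)) else a i - a (n + i))"
      unfolding sum_subtractf[symmetric] using S by (intro sum.cong) (auto simp: swap_pairs_def a_def)
    then have "S \<in> T a"
      using S k by (simp add: T_def)
    moreover have "a \<in> sample_traces G (2 * n) Z"
      by (simp add: a_def sample_traces_def)
    ultimately show "S \<in> (\<Union>a\<in>sample_traces G (2 * n) Z. T a)"
      by blast
  qed
  then have "real (card {S \<in> Pow {..<n}. \<exists>k. r \<le> \<bar>(\<Sum>i<n. G k (Z (swap_pairs n S i)))
             - (\<Sum>i<n. G k (Z (swap_pairs n S (n + i))))\<bar>})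
      \<le> real (card (\<Union>a\<in>sample_traces G (2 * n) Z. T a))"
    using fin by (intro of_nat_mono card_mono) (auto simp: T_def)
  also have "\<dots> \<le> (\<Sum>a\<in>sample_traces G (2 * n) Z. real (card (T a)))"
    using card_UN_le[OF fin, of T] by (simp flip: of_nat_sum)
  also have "\<dots> \<le> (\<Sum>a\<in>sample_traces G (2 * n) Z. 2 * 2 ^ n * exp (- r\<^sup>2 / (2 * real n)))"
  proof (rule sum_mono)
    fix a assume "a \<in> sample_traces G (2 * n) Z"
    then obtain k where a: "a = (\<lambda>j\<in>{..<2 * n}. G k (Z j))"
      by (auto simp: sample_traces_def)
    have "\<bar>a i - a (n + i)\<bar> \<le> 1" if "i < n" for i
      using G_bounds[of i k] G_bounds[of "n + i" k] that by (auto simp: a)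
    then show "real (card (T a)) \<le> 2 * 2 ^ n * exp (- r\<^sup>2 / (2 * real n))"
      using card_sign_flips_abs_ge[of "{..<n}" "\<lambda>i. a i - a (n + i)" r] n r
      by (simp add: T_def lessThan_empty_iff)
  qed
  finally show ?thesis
    by simp
qed

lemma prob_two_sample_deviation_le:
  fixes M :: "'a measure" and G :: "'k::countable \<Rightarrow> 'a \<Rightarrow> real"
  assumes M: "prob_space M" and G: "\<And>k. G k \<in> borel_measurable M"
    and G_bounds: "\<And>k x. x \<in> space M \<Longrightarrow> 0 \<le> G k x \<and> G k x \<le> 1"
    and n: "n > 0" and r: "r \<ge> 0"
    and traces: "\<And>Z. Z \<in> space (PiM {..<2 * n} (\<lambda>_. M)) \<Longrightarrow>
      finite (sample_traces G (2 * n) Z) \<and> real (card (sample_traces G (2 * n) Z)) \<le> C"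
  shows "measure (PiM {..<2 * n} (\<lambda>_. M)) {Z \<in> space (PiM {..<2 * n} (\<lambda>_. M)).
           \<exists>k. r \<le> \<bar>(\<Sum>i<n. G k (Z i)) - (\<Sum>i<n. G k (Z (n + i)))\<bar>}
         \<le> C * (2 * exp (- r\<^sup>2 / (2 * real n)))"
    (is "measure ?P ?B \<le> _")
proof -
  interpret P: prob_space ?P
    using M by (intro prob_space_PiM) auto
  define \<sigma> :: "nat set \<Rightarrow> (nat \<Rightarrow> 'a) \<Rightarrow> nat \<Rightarrow> 'a"
    where "\<sigma> S = (\<lambda>Z. \<lambda>j\<in>{..<2 * n}. Z (swap_pairs n S j))" for S
  have [measurable]: "(\<lambda>Z. G k (Z i)) \<in> borel_measurable ?P" if "i < 2 * n" for k i
    using measurable_compose[OF measurable_component_singleton[of i "{..<2 * n}" "\<lambda>_. M"] G] that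
    by simp
  have "real (card (Pow {..<n})) * P.prob ?B \<le> C * (2 * 2 ^ n * exp (- r\<^sup>2 / (2 * real n)))"
  proof (rule P.card_mult_prob_le_of_invariant[where \<sigma> = \<sigma>])
    show "?B \<in> P.events"
      by measurable
    fix Z assume Z: "Z \<in> space ?P"
    have Z_space: "Z j \<in> space M" if "j < 2 * n" for j
      using Z that by (auto simp: space_PiM)
    have "{S \<in> Pow {..<n}. \<sigma> S Z \<in> ?B} \<subseteq> {S \<in> Pow {..<n}. \<exists>k. r \<le> \<bar>(\<Sum>i<n. G k (Z (swap_pairs n S i)))
             - (\<Sum>i<n. G k (Z (swap_pairs n S (n + i))))\<bar>}"
      by (auto simp: \<sigma>_def)
    then have "real (card {S \<in> Pow {..<n}. \<sigma> S Z \<in> ?B}) \<le> real (card {S \<in> Pow {..<n}.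
        \<exists>k. r \<le> \<bar>(\<Sum>i<n. G k (Z (swap_pairs n S i))) - (\<Sum>i<n. G k (Z (swap_pairs n S (n + i))))\<bar>})"
      by (intro of_nat_mono card_mono) auto
    also have "\<dots> \<le> real (card (sample_traces G (2 * n) Z)) * (2 * 2 ^ n * exp (- r\<^sup>2 / (2 * real n)))"
      using traces[OF Z] G_bounds Z_space n r by (intro card_swaps_deviation_ge) auto
    also have "\<dots> \<le> C * (2 * 2 ^ n * exp (- r\<^sup>2 / (2 * real n)))"
      using traces[OF Z] by (intro mult_right_mono) auto
    finally show "real (card {S \<in> Pow {..<n}. \<sigma> S Z \<in> ?B}) \<le> C * (2 * 2 ^ n * exp (- r\<^sup>2 / (2 * real n)))" .
  qed (use M swap_pairs_measurable distr_PiM_swap_pairs in \<open>auto simp: \<sigma>_def\<close>)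
  then show ?thesis
    by (simp add: card_Pow mult_ac)
qed

lemma uniform_deviation_bound:
  fixes M :: "'a measure" and G :: "'k::countable \<Rightarrow> 'a \<Rightarrow> real"
  assumes M: "prob_space M" and G: "\<And>k. G k \<in> borel_measurable M"
    and G_bounds: "\<And>k x. x \<in> space M \<Longrightarrow> 0 \<le> G k x \<and> G k x \<le> 1"
    and n: "n > 0" and s: "s \<ge> 0" and ghost: "2 * exp (- real n * s\<^sup>2 / 2) \<le> 1 / 2"
    and traces: "\<And>Z. Z \<in> space (PiM {..<2 * n} (\<lambda>_. M)) \<Longrightarrow>
      finite (sample_traces G (2 * n) Z) \<and> real (card (sample_traces G (2 * n) Z)) \<le> C"
  shows "measure (PiM {..<n} (\<lambda>_. M)) {D \<in> space (PiM {..<n} (\<lambda>_. M)).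
           \<exists>k. \<bar>(\<Sum>i<n. G k (D i)) - real n * (\<integral>x. G k x \<partial>M)\<bar> \<ge> real n * s}
         \<le> 4 * C * exp (- real n * s\<^sup>2 / 8)"
proof -
  have "0 \<le> real n * s / 2"
    using s by simp
  note two_sample = prob_two_sample_deviation_le[where r = "real n * s / 2", OF M G G_bounds n this traces]
  have exponent: "- (real n * s / 2)\<^sup>2 / (2 * real n) = - real n * s\<^sup>2 / 8"
    using n by (simp add: power2_eq_square)
  have "2 * (C * (2 * exp (- real n * s\<^sup>2 / 8))) = 4 * C * exp (- real n * s\<^sup>2 / 8)"
    by simp
  then show ?thesis
    using symmetrization[of M G n s, OF M G G_bounds n s ghost] two_sample[unfolded exponent]
    by linarith
qed

section \<open>Traces of boxes\<close>

lemma card_subsets_card_le: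
  assumes "finite A"
  shows "card {K. K \<subseteq> A \<and> card K \<le> d} \<le> (\<Sum>i\<le>d. card A choose i)"
proof -
  have "{K. K \<subseteq> A \<and> card K \<le> d} = (\<Union>i\<le>d. {K. K \<subseteq> A \<and> card K = i})"
    by auto
  then have "card {K. K \<subseteq> A \<and> card K \<le> d} \<le> (\<Sum>i\<le>d. card {K. K \<subseteq> A \<and> card K = i})"
    by (simp add: card_UN_le)
  also have "\<dots> = (\<Sum>i\<le>d. card A choose i)"
    by (simp add: n_subsets assms)
  finally show ?thesis .
qed

lemma sum_binomial_le_exp_power:
  assumes "1 \<le> d" "d \<le> N"
  shows "real (\<Sum>i\<le>d. N choose i) \<le> (exp 1 * N / d) ^ d"
proof -
  define y where "y = real d / real N"
  have y0: "y > 0" and y1: "y \<le> 1" using assms by (auto simp: y_def)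
  have "y ^ d * real (\<Sum>i\<le>d. N choose i) = (\<Sum>i\<le>d. real (N choose i) * y ^ d)"
    by (simp add: sum_distrib_left mult.commute)
  also have "\<dots> \<le> (\<Sum>i\<le>d. real (N choose i) * y ^ i)"
    by (intro sum_mono mult_left_mono power_decreasing) (use y0 y1 in auto)
  also have "\<dots> \<le> (\<Sum>i\<le>N. real (N choose i) * y ^ i)"
    by (intro sum_mono2) (use assms y0 in auto)
  also have "\<dots> = (y + 1) ^ N"
    by (simp add: binomial_ring mult.commute)
  also have "\<dots> = (1 + real d / real N) ^ N"
    by (simp add: y_def add.commute)
  also have "\<dots> \<le> exp d"
    by (rule exp_ge_one_plus_x_over_n_power_n) (use assms in auto)
  also have "\<dots> = exp 1 ^ d"
    by (simp flip: exp_of_nat_mult)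
  finally have "y ^ d * real (\<Sum>i\<le>d. N choose i) \<le> exp 1 ^ d" .
  moreover have "(exp 1 * N / d) ^ d = exp 1 ^ d / y ^ d"
    by (simp add: y_def power_divide power_mult_distrib)
  ultimately show ?thesis
    using y0 by (simp add: pos_le_divide_eq mult.commute)
qed

text \<open>The condition \<open>K \<noteq> {}\<close> makes the empty set of points represent the empty trace.\<close>

definition bbox_trace :: "nat \<Rightarrow> nat \<Rightarrow> (nat \<Rightarrow> point) \<Rightarrow> nat set \<Rightarrow> nat set" where
  "bbox_trace db N Z K =
     {j. j < N \<and> K \<noteq> {} \<and> (\<forall>l<db. (\<exists>k\<in>K. Z k l \<le> Z j l) \<and> (\<exists>k\<in>K. Z j l \<le> Z k l))}"

lemma bbox_trace_subset_box_trace: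
  assumes "K \<subseteq> {j. j < N \<and> (\<forall>l<db. c l \<le> Z j l \<and> Z j l < e l)}"
  shows "bbox_trace db N Z K \<subseteq> {j. j < N \<and> (\<forall>l<db. c l \<le> Z j l \<and> Z j l < e l)}"
proof safe
  fix j l assume j: "j \<in> bbox_trace db N Z K" and l: "l < db"
  then obtain k k' where "k \<in> K" "Z k l \<le> Z j l" "k' \<in> K" "Z j l \<le> Z k' l"
    unfolding bbox_trace_def by blast
  moreover have "c l \<le> Z k l" "Z k' l < e l"
    using assms \<open>k \<in> K\<close> \<open>k' \<in> K\<close> l by auto
  ultimately show "c l \<le> Z j l" "Z j l < e l"
    by linarith+
qed (simp add: bbox_trace_def)

lemma box_trace_eq_bbox_trace:
  fixes c e :: point
  assumes db: "db \<ge> 1"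
  obtains K where "K \<subseteq> {..<N}" "card K \<le> 2 * db"
    "{j. j < N \<and> (\<forall>l<db. c l \<le> Z j l \<and> Z j l < e l)} = bbox_trace db N Z K"
proof -
  define T where "T = {j. j < N \<and> (\<forall>l<db. c l \<le> Z j l \<and> Z j l < e l)}"
  have fin: "finite T" by (simp add: T_def)
  show ?thesis
  proof (cases "T = {}")
    case True
    then show ?thesis
      using that[of "{}"] by (simp add: T_def bbox_trace_def)
  next
    case False
    define kmin where "kmin l = arg_min_on (\<lambda>j. Z j l) T" for l
    define kmax where "kmax l = arg_min_on (\<lambda>j. - Z j l) T" for l
    have kmin: "kmin l \<in> T" "Z (kmin l) l \<le> Z j l" if "j \<in> T" for j l
      unfolding kmin_def using arg_min_if_finite(1) arg_min_least fin False that by fast+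
    have kmax: "kmax l \<in> T" "Z j l \<le> Z (kmax l) l" if "j \<in> T" for j l
      using arg_min_if_finite(1)[OF fin False] arg_min_least[OF fin False that, of "\<lambda>j. - Z j l"]
      by (simp_all add: kmax_def)
    define K where "K = kmin ` {..<db} \<union> kmax ` {..<db}"
    have KT: "K \<subseteq> T"
      using kmin(1) kmax(1) False by (auto simp: K_def)
    have "K \<noteq> {}"
      using db by (auto simp: K_def lessThan_empty_iff)
    have "card K \<le> db + db"
      unfolding K_def by (rule card_Un_le[THEN order_trans], rule add_mono) (use card_image_le[of "{..<db}"] in auto)
    moreover have "K \<subseteq> {..<N}"
      using KT by (auto simp: T_def)
    moreover have "T \<subseteq> bbox_trace db N Z K"
    proof
      fix j assume j: "j \<in> T"
      have "(\<exists>k\<in>K. Z k l \<le> Z j l) \<and> (\<exists>k\<in>K. Z j l \<le> Z k l)" if "l < db" for l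
        using that kmin(2)[OF j, of l] kmax(2)[OF j, of l] by (auto simp: K_def)
      then show "j \<in> bbox_trace db N Z K"
        using j \<open>K \<noteq> {}\<close> by (simp add: bbox_trace_def T_def)
    qed
    moreover have "bbox_trace db N Z K \<subseteq> T"
      using KT unfolding T_def by (rule bbox_trace_subset_box_trace)
    ultimately show ?thesis
      using that by (simp add: T_def)
  qed
qed

definition cube_measure :: "nat \<Rightarrow> point measure" where
  "cube_measure db = PiM {..<db} (\<lambda>_. restrict_space borel {0..1::real})"

lemma space_eq_cube:
  assumes "sets M = sets (cube_measure db)"
  shows "space M = PiE {..<db} (\<lambda>_. {0..1})"
  using sets_eq_imp_space_eq[OF assms] by (simp add: cube_measure_def space_PiM)

lemma measurable_coordinate_cube:
  assumes sets: "sets M = sets (cube_measure db)" and j: "j < db"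
  shows "(\<lambda>p. p j) \<in> borel_measurable M"
proof -
  have "(\<lambda>p. p j) \<in> cube_measure db \<rightarrow>\<^sub>M restrict_space borel {0..1::real}"
    unfolding cube_measure_def using j by (intro measurable_component_singleton) auto
  then have "(\<lambda>p. p j) \<in> borel_measurable (cube_measure db)"
    by (rule measurable_compose[OF _ measurable_restrict_space1]) simp
  then show ?thesis
    using measurable_cong_sets[OF sets refl] by blast
qed

definition match_weight :: "nat \<Rightarrow> nat \<Rightarrow> bool \<Rightarrow> query \<Rightarrow> point \<Rightarrow> real" where
  "match_weight db m w q p = (if matches db p q then if w then p m else 1 else 0)"

lemma match_weight_measurable:
  assumes sets: "sets M = sets (cube_measure db)" and m: "m < db"
  shows "match_weight db m w q \<in> borel_measurable M"
proof -
  have [measurable]: "(\<lambda>p. p j) \<in> borel_measurable M" if "j < db" for j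
    using measurable_coordinate_cube[OF sets that] .
  have [measurable]: "(\<lambda>p. p m) \<in> borel_measurable M"
    using measurable_coordinate_cube[OF sets m] .
  have [measurable]: "Measurable.pred M (\<lambda>p. matches db p q)"
    unfolding matches_def by measurable
  show ?thesis
    unfolding match_weight_def by measurable
qed

lemma match_weight_bounds:
  assumes "sets M = sets (cube_measure db)" "m < db" "p \<in> space M"
  shows "0 \<le> match_weight db m w q p" "match_weight db m w q p \<le> 1"
    "match_weight db m True q p \<le> match_weight db m False q p"
  using assms space_eq_cube[OF assms(1)] by (auto simp: match_weight_def PiE_def Pi_def)

lemma fC_D_eq_sum: "fC_D db n D q = (\<Sum>i<n. match_weight db m False q (D i))"
  by (simp add: fC_D_def match_weight_def sum.If_cases Int_def)

lemma fS_D_eq_sum: "fS_D db m n D q = (\<Sum>i<n. match_weight db m True q (D i))"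
  by (simp add: fS_D_def match_weight_def sum.If_cases Int_def conj_commute)

lemma integrable_match_weight:
  assumes chi: "prob_space chi" and sets: "sets chi = sets (cube_measure db)" and m: "m < db"
  shows "integrable chi (match_weight db m w q)"
proof -
  interpret chi: prob_space chi by fact
  show ?thesis
    using match_weight_bounds[OF sets m]
    by (intro chi.integrable_const_bound[where B = 1] match_weight_measurable[OF sets m] AE_I2) auto
qed

lemma integral_db_measure_match_weight:
  assumes chi: "prob_space chi" and sets: "sets chi = sets (cube_measure db)" and m: "m < db"
  shows "(\<integral>D. (\<Sum>i<n. match_weight db m w q (D i)) \<partial>db_measure n chi)
    = real n * (\<integral>p. match_weight db m w q p \<partial>chi)"
  unfolding db_measure_def
  by (simp add: integral_PiM_sum_components[OF chi integrable_match_weight[OF chi sets m]])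

text \<open>Boxes with rational corners form a countable family, so the event of a large deviation for
  one of them is measurable; every box is a pointwise limit of such boxes.\<close>

definition rat_query :: "rat list \<times> rat list \<Rightarrow> query" where
  "rat_query k = (\<lambda>l. of_rat (fst k ! l), \<lambda>l. of_rat (snd k ! l) - of_rat (fst k ! l))"

definition rat_query_weights :: "nat \<Rightarrow> nat \<Rightarrow> bool \<times> rat list \<times> rat list \<Rightarrow> point \<Rightarrow> real" where
  "rat_query_weights db m = (\<lambda>(w, k). match_weight db m w (rat_query k))"

lemma rat_seq_tendsto_from_below:
  fixes y :: real
  obtains a :: "nat \<Rightarrow> rat" where "\<And>k. of_rat (a k) < y" and "(\<lambda>k. of_rat (a k)) \<longlonglongrightarrow> y"
proof -
  have "\<forall>k. \<exists>r::rat. y - 1 / Suc k < of_rat r \<and> of_rat r < y"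
  proof
    fix k
    obtain x where "x \<in> \<rat>" "y - 1 / Suc k < x" "x < y"
      using Rats_dense_in_real[of "y - 1 / Suc k" y] by auto
    then show "\<exists>r::rat. y - 1 / Suc k < of_rat r \<and> of_rat r < y"
      by (auto elim!: Rats_cases)
  qed
  then obtain a :: "nat \<Rightarrow> rat" where a: "\<forall>k. y - 1 / Suc k < of_rat (a k) \<and> of_rat (a k) < y"
    by (auto dest: choice)
  have lower: "(\<lambda>k. y - 1 / Suc k) \<longlonglongrightarrow> y"
    using tendsto_diff[OF tendsto_const LIMSEQ_Suc[OF lim_const_over_n[of 1]], of y] by simp
  have "(\<lambda>k. of_rat (a k)) \<longlonglongrightarrow> y"
    by (rule real_tendsto_sandwich[OF _ _ lower tendsto_const]) (use a in \<open>auto intro!: always_eventually less_imp_le\<close>)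
  then show ?thesis
    using a that by blast
qed

lemma eventually_thresholds_from_below:
  fixes a :: "nat \<Rightarrow> real"
  assumes below: "\<And>k. a k < y" and lim: "a \<longlonglongrightarrow> y"
  shows "eventually (\<lambda>k. (a k \<le> p \<longleftrightarrow> y \<le> p) \<and> (p < a k \<longleftrightarrow> p < y)) sequentially"
proof (cases "y \<le> p")
  case True
  have "a k \<le> p \<and> \<not> p < a k" for k
    using below[of k] True by linarith
  then show ?thesis
    using True by (auto intro: always_eventually)
next
  case False
  then have "eventually (\<lambda>k. p < a k) sequentially"
    using order_tendstoD(1)[OF lim, of p] by simp
  then show ?thesis
    using False by (elim eventually_mono) auto
qed

lemma rat_queries_tendsto:
  obtains ks where "\<And>p. eventually (\<lambda>k. matches db p (rat_query (ks k)) \<longleftrightarrow> matches db p q) sequentially"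
proof -
  obtain c r where q: "q = (c, r)" by fastforce
  have "\<forall>y::real. \<exists>a :: nat \<Rightarrow> rat. (\<forall>k. of_rat (a k) < y) \<and> (\<lambda>k. of_rat (a k)) \<longlonglongrightarrow> y"
    using rat_seq_tendsto_from_below by blast
  then obtain a :: "real \<Rightarrow> nat \<Rightarrow> rat"
    where a: "\<And>y k. of_rat (a y k) < y" "\<And>y. (\<lambda>k. of_rat (a y k)) \<longlonglongrightarrow> y"
    using choice[of "\<lambda>y a. (\<forall>k. of_rat (a k) < y) \<and> (\<lambda>k. of_rat (a k)) \<longlonglongrightarrow> y"] by blast
  define ks where "ks k = (map (\<lambda>l. a (c l) k) [0..<db], map (\<lambda>l. a (c l + r l) k) [0..<db])" for k
  have "eventually (\<lambda>k. matches db p (rat_query (ks k)) \<longleftrightarrow> matches db p q) sequentially" for p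
  proof -
    have "\<forall>l\<in>{..<db}. eventually (\<lambda>k. (of_rat (a (c l) k) \<le> p l \<longleftrightarrow> c l \<le> p l) \<and>
        (p l < of_rat (a (c l + r l) k) \<longleftrightarrow> p l < c l + r l)) sequentially"
    proof
      fix l
      show "eventually (\<lambda>k. (of_rat (a (c l) k) \<le> p l \<longleftrightarrow> c l \<le> p l) \<and>
          (p l < of_rat (a (c l + r l) k) \<longleftrightarrow> p l < c l + r l)) sequentially"
        using eventually_conj[OF eventually_thresholds_from_below[OF a, of "c l" "p l"]
            eventually_thresholds_from_below[OF a, of "c l + r l" "p l"]]
        by (rule eventually_mono) blast
    qed
    then have "eventually (\<lambda>k. \<forall>l\<in>{..<db}. (of_rat (a (c l) k) \<le> p l \<longleftrightarrow> c l \<le> p l) \<and>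
        (p l < of_rat (a (c l + r l) k) \<longleftrightarrow> p l < c l + r l)) sequentially"
      by (simp add: eventually_ball_finite)
    then show ?thesis
      by (elim eventually_mono) (simp add: matches_def rat_query_def ks_def q)
  qed
  then show ?thesis
    using that by blast
qed

lemma rat_query_deviation_ge:
  assumes chi: "prob_space chi" and sets: "sets chi = sets (cube_measure db)" and m: "m < db"
    and dev: "\<bar>(\<Sum>i<n. match_weight db m w q (D i)) - real n * (\<integral>p. match_weight db m w q p \<partial>chi)\<bar> > a"
  shows "\<exists>k. \<bar>(\<Sum>i<n. rat_query_weights db m k (D i)) - real n * (\<integral>p. rat_query_weights db m k p \<partial>chi)\<bar> \<ge> a"
proof -
  interpret chi: prob_space chi by fact
  obtain ks where ks: "\<And>p. eventually (\<lambda>k. matches db p (rat_query (ks k)) \<longleftrightarrow> matches db p q) sequentially"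
    using rat_queries_tendsto by blast
  have conv: "(\<lambda>k. match_weight db m w (rat_query (ks k)) p) \<longlonglongrightarrow> match_weight db m w q p" for p
    by (intro tendsto_eventually eventually_mono[OF ks[of p]]) (simp add: match_weight_def)
  have "(\<lambda>k. \<integral>p. match_weight db m w (rat_query (ks k)) p \<partial>chi) \<longlonglongrightarrow> (\<integral>p. match_weight db m w q p \<partial>chi)"
  proof (rule integral_dominated_convergence[where w = "\<lambda>_. 1"])
    show "AE x in chi. norm (match_weight db m w (rat_query (ks k)) x) \<le> 1" for k
      using match_weight_bounds[OF sets m] by (intro AE_I2) auto
  qed (use conv match_weight_measurable[OF sets m] in auto)
  then have "(\<lambda>k. \<bar>(\<Sum>i<n. match_weight db m w (rat_query (ks k)) (D i))
      - real n * (\<integral>p. match_weight db m w (rat_query (ks k)) p \<partial>chi)\<bar>)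
      \<longlonglongrightarrow> \<bar>(\<Sum>i<n. match_weight db m w q (D i)) - real n * (\<integral>p. match_weight db m w q p \<partial>chi)\<bar>"
    by (intro tendsto_intros conv)
  from order_tendstoD(1)[OF this dev] obtain k where
    "\<bar>(\<Sum>i<n. match_weight db m w (rat_query (ks k)) (D i))
      - real n * (\<integral>p. match_weight db m w (rat_query (ks k)) p \<partial>chi)\<bar> > a"
    by (auto dest: eventually_happens)
  then show ?thesis
    by (intro exI[of _ "(w, ks k)"]) (simp add: rat_query_weights_def)
qed

lemma card_rat_query_traces_le:
  assumes db: "db \<ge> 1"
  shows "finite (sample_traces (rat_query_weights db m) N Z)
    \<and> real (card (sample_traces (rat_query_weights db m) N Z)) \<le> 2 * real (\<Sum>i\<le>2 * db. N choose i)"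
proof -
  define KK where "KK = {K. K \<subseteq> {..<N} \<and> card K \<le> 2 * db}"
  define h where "h = (\<lambda>(w, T). \<lambda>j\<in>{..<N}. if j \<in> T then if w then Z j m else 1 else (0::real))"
  define H where "H = h ` (UNIV \<times> bbox_trace db N Z ` KK)"
  have fin_KK: "finite KK"
    unfolding KK_def by (rule finite_subset[of _ "Pow {..<N}"]) auto
  have traces_sub: "sample_traces (rat_query_weights db m) N Z \<subseteq> H"
  proof
    fix x assume "x \<in> sample_traces (rat_query_weights db m) N Z"
    then obtain w cs es where x: "x = (\<lambda>j\<in>{..<N}. match_weight db m w (rat_query (cs, es)) (Z j))"
      by (auto simp: sample_traces_def rat_query_weights_def)
    define T where "T = {j. j < N \<and> (\<forall>l<db. of_rat (cs ! l) \<le> Z j l \<and> Z j l < of_rat (es ! l))}"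
    obtain K where "K \<subseteq> {..<N}" "card K \<le> 2 * db" "T = bbox_trace db N Z K"
      unfolding T_def by (rule box_trace_eq_bbox_trace[OF db])
    then have "T \<in> bbox_trace db N Z ` KK"
      by (auto simp: KK_def)
    moreover have "x = h (w, T)"
      unfolding x h_def prod.case
      by (intro restrict_ext) (simp add: T_def match_weight_def matches_def rat_query_def)
    ultimately show "x \<in> H"
      by (simp add: H_def)
  qed
  have fin_H: "finite H"
    using fin_KK by (simp add: H_def)
  have "card H \<le> card ((UNIV :: bool set) \<times> bbox_trace db N Z ` KK)"
    unfolding H_def using fin_KK by (intro card_image_le) simp
  also have "\<dots> \<le> 2 * card KK"
    using card_image_le[OF fin_KK, of "bbox_trace db N Z"] by (simp add: card_cartesian_product)
  also have "\<dots> \<le> 2 * (\<Sum>i\<le>2 * db. N choose i)"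
    using card_subsets_card_le[of "{..<N}" "2 * db"] by (simp add: KK_def)
  finally have "card (sample_traces (rat_query_weights db m) N Z) \<le> 2 * (\<Sum>i\<le>2 * db. N choose i)"
    using card_mono[OF fin_H traces_sub] by linarith
  then have "real (card (sample_traces (rat_query_weights db m) N Z)) \<le> real (2 * (\<Sum>i\<le>2 * db. N choose i))"
    by (rule of_nat_mono)
  then show ?thesis
    using finite_subset[OF traces_sub fin_H] by simp
qed

section \<open>The error of the empirical average\<close>

lemma relative_ratio_error_le:
  fixes P S c s \<delta> \<xi> \<epsilon> :: real
  assumes \<xi>: "0 < \<xi>" "\<xi> \<le> P" and S: "0 \<le> S" "S \<le> P" and \<epsilon>: "0 < \<epsilon>"
    and c: "\<bar>c - P\<bar> \<le> \<delta>" and s: "\<bar>s - S\<bar> \<le> \<delta>" and \<delta>: "\<delta> * (2 + \<epsilon>) \<le> \<xi> * \<epsilon>"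
  shows "\<bar>S / P - s / c\<bar> / (\<bar>S / P\<bar> + 1) \<le> \<epsilon> / 2"
proof -
  define a where "a = S / P"
  have a: "0 \<le> a" "a \<le> 1" "a * P = S"
    using \<xi> S by (auto simp: a_def)
  have "\<delta> * (2 + \<epsilon>) < \<xi> * (2 + \<epsilon>)"
    using \<delta> \<xi> by (simp add: algebra_simps)
  then have "\<delta> < \<xi>"
    using \<epsilon> by (simp add: mult_less_cancel_right)
  then have c_pos: "0 < \<xi> - \<delta>" "\<xi> - \<delta> \<le> c"
    using c \<xi> by linarith+
  have "\<bar>a * c - s\<bar> = \<bar>a * (c - P) + (S - s)\<bar>"
    using a by (simp add: algebra_simps)
  also have "\<dots> \<le> a * \<bar>c - P\<bar> + \<bar>S - s\<bar>"
    using abs_triangle_ineq[of "a * (c - P)" "S - s"] a by (simp add: abs_mult)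
  also have "\<dots> \<le> a * \<delta> + \<delta>"
    using a c s by (intro add_mono mult_left_mono) (simp_all add: abs_minus_commute)
  finally have "\<bar>a - s / c\<bar> \<le> \<delta> * (a + 1) / c"
    using c_pos by (simp add: abs_div_pos[symmetric] field_simps)
  also have "\<dots> \<le> \<delta> * (a + 1) / (\<xi> - \<delta>)"
    using c_pos a c by (intro divide_left_mono mult_nonneg_nonneg) auto
  finally have "\<bar>a - s / c\<bar> / (a + 1) \<le> \<delta> / (\<xi> - \<delta>)"
    using a by (simp add: divide_le_eq)
  also have "\<dots> \<le> \<epsilon> / 2"
    using \<delta> c_pos by (simp add: field_simps)
  finally show ?thesis
    unfolding a_def[symmetric] using a(1) by simp
qed

lemma err_gt_imp_deviation:
  assumes chi: "prob_space chi" and sets: "sets chi = sets (cube_measure db)" and m: "m < db"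
    and n: "n > 0" and \<xi>: "\<xi> > 0" and \<epsilon>: "\<epsilon> > 0"
    and q: "q \<in> queries_xi db n chi \<xi>" and err: "err db m n chi D q > \<epsilon> / 2"
  shows "\<exists>w. \<bar>(\<Sum>i<n. match_weight db m w q (D i)) - real n * (\<integral>p. match_weight db m w q p \<partial>chi)\<bar>
           > real n * (\<xi> * \<epsilon> / (1 + \<epsilon>) / 4)"
proof (rule ccontr)
  define P where "P = (\<integral>p. match_weight db m False q p \<partial>chi)"
  define S where "S = (\<integral>p. match_weight db m True q p \<partial>chi)"
  define \<delta> where "\<delta> = \<xi> * \<epsilon> / (1 + \<epsilon>) / 4"
  assume "\<not> ?thesis"
  then have "\<bar>fC_D db n D q - real n * P\<bar> \<le> real n * \<delta>" "\<bar>fS_D db m n D q - real n * S\<bar> \<le> real n * \<delta>"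
    unfolding fC_D_eq_sum[of _ _ _ _ m] fS_D_eq_sum P_def S_def \<delta>_def by (auto simp: not_less)
  then have C_dev: "\<bar>fC_D db n D q / n - P\<bar> \<le> \<delta>" and S_dev: "\<bar>fS_D db m n D q / n - S\<bar> \<le> \<delta>"
    using n by (auto simp: abs_le_iff field_simps)
  have fC: "fC_chi db n chi q = real n * P" and fS: "fS_chi db m n chi q = real n * S"
    unfolding fC_chi_def fS_chi_def fC_D_eq_sum[of _ _ _ _ m] fS_D_eq_sum P_def S_def
    by (simp_all add: integral_db_measure_match_weight[OF chi sets m])
  have "\<xi> \<le> P"
    using q n by (simp add: queries_xi_def fC)
  moreover have "0 \<le> S"
    unfolding S_def by (intro integral_nonneg_AE AE_I2 match_weight_bounds(1)[OF sets m])
  moreover have "S \<le> P"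
    unfolding S_def P_def
    by (intro integral_mono integrable_match_weight[OF chi sets m] match_weight_bounds(3)[OF sets m])
  moreover have "\<delta> * (2 + \<epsilon>) \<le> \<xi> * \<epsilon>"
    using \<xi> \<epsilon> by (simp add: \<delta>_def field_simps)
  ultimately have "\<bar>S / P - (fS_D db m n D q / n) / (fC_D db n D q / n)\<bar> / (\<bar>S / P\<bar> + 1) \<le> \<epsilon> / 2"
    using relative_ratio_error_le[OF \<xi> _ _ _ \<epsilon> C_dev S_dev] by simp
  moreover have "err db m n chi D q = \<bar>S / P - (fS_D db m n D q / n) / (fC_D db n D q / n)\<bar> / (\<bar>S / P\<bar> + 1)"
    using n by (simp add: err_def fA_chi_def fA_D_def fC fS)
  ultimately show False
    using err by simp
qed

lemma err_event_subset:
  assumes chi: "prob_space chi" and sets: "sets chi = sets (cube_measure db)" and m: "m < db"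
    and n: "n > 0" and \<xi>: "\<xi> > 0" and \<epsilon>: "\<epsilon> > 0"
  shows "{D \<in> space (db_measure n chi). ereal \<epsilon> \<le> (SUP q\<in>queries_xi db n chi \<xi>. ereal (err db m n chi D q))}
    \<subseteq> {D \<in> space (PiM {..<n} (\<lambda>_. chi)). \<exists>k. real n * (\<xi> * \<epsilon> / (1 + \<epsilon>) / 4)
          \<le> \<bar>(\<Sum>i<n. rat_query_weights db m k (D i)) - real n * (\<integral>p. rat_query_weights db m k p \<partial>chi)\<bar>}"
proof safe
  fix D assume "D \<in> space (db_measure n chi)"
    and sup: "ereal \<epsilon> \<le> (SUP q\<in>queries_xi db n chi \<xi>. ereal (err db m n chi D q))"
  then show "D \<in> space (PiM {..<n} (\<lambda>_. chi))"
    by (simp add: db_measure_def)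
  have "ereal (\<epsilon> / 2) < (SUP q\<in>queries_xi db n chi \<xi>. ereal (err db m n chi D q))"
    using sup \<epsilon> by (auto intro: less_le_trans[of _ "ereal \<epsilon>"])
  then obtain q where "q \<in> queries_xi db n chi \<xi>" "err db m n chi D q > \<epsilon> / 2"
    by (auto simp: less_SUP_iff)
  then obtain w where "\<bar>(\<Sum>i<n. match_weight db m w q (D i)) - real n * (\<integral>p. match_weight db m w q p \<partial>chi)\<bar>
      > real n * (\<xi> * \<epsilon> / (1 + \<epsilon>) / 4)"
    using err_gt_imp_deviation[OF chi sets m n \<xi> \<epsilon>] by blast
  then show "\<exists>k. real n * (\<xi> * \<epsilon> / (1 + \<epsilon>) / 4)
      \<le> \<bar>(\<Sum>i<n. rat_query_weights db m k (D i)) - real n * (\<integral>p. rat_query_weights db m k p \<partial>chi)\<bar>"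
    using rat_query_deviation_ge[OF chi sets m] by blast
qed

lemma prob_rat_query_deviation_le:
  assumes chi: "prob_space chi" and sets: "sets chi = sets (cube_measure db)" and m: "m < db"
    and db: "db \<ge> 1" and n: "n > 0" and d_le: "db \<le> n" and s: "s \<ge> 0"
    and ghost: "2 * exp (- real n * s\<^sup>2 / 2) \<le> 1 / 2"
  shows "measure (PiM {..<n} (\<lambda>_. chi)) {D \<in> space (PiM {..<n} (\<lambda>_. chi)). \<exists>k. real n * s
           \<le> \<bar>(\<Sum>i<n. rat_query_weights db m k (D i)) - real n * (\<integral>p. rat_query_weights db m k p \<partial>chi)\<bar>}
         \<le> 8 * (exp 1 * real (2 * n) / real (2 * db)) ^ (2 * db) * exp (- real n * s\<^sup>2 / 8)"
proof -
  have weights: "rat_query_weights db m k \<in> borel_measurable chi"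
    "\<And>p. p \<in> space chi \<Longrightarrow> 0 \<le> rat_query_weights db m k p \<and> rat_query_weights db m k p \<le> 1" for k
    using match_weight_measurable[OF sets m] match_weight_bounds[OF sets m]
    by (simp_all add: rat_query_weights_def split: prod.splits)
  have "measure (PiM {..<n} (\<lambda>_. chi)) {D \<in> space (PiM {..<n} (\<lambda>_. chi)). \<exists>k. real n * s
           \<le> \<bar>(\<Sum>i<n. rat_query_weights db m k (D i)) - real n * (\<integral>p. rat_query_weights db m k p \<partial>chi)\<bar>}
      \<le> 4 * (2 * real (\<Sum>i\<le>2 * db. (2 * n) choose i)) * exp (- real n * s\<^sup>2 / 8)"
    by (rule uniform_deviation_bound[OF chi weights n s ghost card_rat_query_traces_le[OF db]])
  also have "\<dots> \<le> 4 * (2 * (exp 1 * real (2 * n) / real (2 * db)) ^ (2 * db)) * exp (- real n * s\<^sup>2 / 8)"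
    using sum_binomial_le_exp_power[of "2 * db" "2 * n"] db d_le by simp
  finally show ?thesis
    by simp
qed

lemma outer_prob_le_mono:
  assumes "outer_prob_le M E b" and "b \<le> b'"
  shows "outer_prob_le M E b'"
proof -
  obtain A where "A \<in> sets M" "E \<subseteq> A" "measure M A \<le> b"
    using assms(1) unfolding outer_prob_le_def by blast
  then show ?thesis
    using assms(2) unfolding outer_prob_le_def by (intro bexI[of _ A] conjI) auto
qed

lemma outer_prob_err_le:
  assumes chi: "prob_space chi" and sets: "sets chi = sets (cube_measure db)" and m: "m < db"
    and db: "db \<ge> 1" and n: "n > 0" and d_le: "db \<le> n" and \<xi>: "\<xi> > 0" and \<epsilon>: "\<epsilon> > 0"
    and ghost: "2 * exp (- real n * (\<xi> * \<epsilon> / (1 + \<epsilon>) / 4)\<^sup>2 / 2) \<le> 1 / 2"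
  shows "outer_prob_le (db_measure n chi)
    {D \<in> space (db_measure n chi). ereal \<epsilon> \<le> (SUP q\<in>queries_xi db n chi \<xi>. ereal (err db m n chi D q))}
    (8 * (exp 1 * real (2 * n) / real (2 * db)) ^ (2 * db) * exp (- real n * (\<xi> * \<epsilon> / (1 + \<epsilon>) / 4)\<^sup>2 / 8))"
proof -
  define A where "A = {D \<in> space (PiM {..<n} (\<lambda>_. chi)). \<exists>k. real n * (\<xi> * \<epsilon> / (1 + \<epsilon>) / 4)
      \<le> \<bar>(\<Sum>i<n. rat_query_weights db m k (D i)) - real n * (\<integral>p. rat_query_weights db m k p \<partial>chi)\<bar>}"
  have [measurable]: "(\<lambda>D. rat_query_weights db m k (D i)) \<in> borel_measurable (PiM {..<n} (\<lambda>_. chi))"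
    if "i < n" for k i
    using measurable_compose[OF measurable_component_singleton[of i "{..<n}" "\<lambda>_. chi"]
        match_weight_measurable[OF sets m]] that
    by (simp add: rat_query_weights_def split: prod.splits)
  have "A \<in> sets (db_measure n chi)"
    unfolding A_def db_measure_def by measurable
  moreover have "{D \<in> space (db_measure n chi).
      ereal \<epsilon> \<le> (SUP q\<in>queries_xi db n chi \<xi>. ereal (err db m n chi D q))} \<subseteq> A"
    unfolding A_def by (rule err_event_subset[OF chi sets m n \<xi> \<epsilon>])
  moreover have "measure (db_measure n chi) A
      \<le> 8 * (exp 1 * real (2 * n) / real (2 * db)) ^ (2 * db) * exp (- real n * (\<xi> * \<epsilon> / (1 + \<epsilon>) / 4)\<^sup>2 / 8)"
    unfolding A_def db_measure_def using \<xi> \<epsilon>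
    by (intro prob_rat_query_deviation_le[OF chi sets m db n d_le _ ghost]) simp
  ultimately show ?thesis
    unfolding outer_prob_le_def by blast
qed

lemma power_mult_exp_neg_le:
  fixes x c :: real
  assumes c: "c > 0" and x: "x \<ge> 0"
  shows "x ^ d * exp (- c * x) \<le> (d / (c * exp 1)) ^ d"
proof (cases "d = 0")
  case False
  define y where "y = c * x / d"
  have y: "y \<ge> 0" using c x by (simp add: y_def)
  have "y \<le> exp (y - 1)"
    using exp_ge_add_one_self[of "y - 1"] by simp
  then have "y * exp (- y) \<le> exp (-1)"
    by (simp add: exp_diff exp_minus field_simps)
  then have "(y * exp (- y)) ^ d \<le> exp (-1) ^ d"
    using y by (simp add: power_mono)
  moreover have "x ^ d * exp (- c * x) = (d / c) ^ d * (y * exp (- y)) ^ d"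
  proof -
    have x_eq: "x = d / c * y" and exponent_eq: "- c * x = real d * (- y)"
      using False c by (simp_all add: y_def)
    show ?thesis
      unfolding exponent_eq exp_of_nat_mult unfolding x_eq by (simp add: power_divide power_mult_distrib)
  qed
  ultimately have "x ^ d * exp (- c * x) \<le> (d / c) ^ d * exp (-1) ^ d"
    using c by (simp add: mult_left_mono)
  also have "d / c * exp (-1) = d / (c * exp 1)"
    by (simp add: exp_minus field_simps)
  then have "(d / c) ^ d * exp (-1) ^ d = (d / (c * exp 1)) ^ d"
    by (simp flip: power_mult_distrib)
  finally show ?thesis .
qed (use c x in simp)

lemma less_exp_if_mult_exp_neg_less:
  fixes a y :: real
  assumes "a * exp (- y) < 1"
  shows "a < exp y"
proof -
  have "a = a * exp (- y) * exp y"
    by (simp add: mult.assoc flip: exp_add)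
  also have "\<dots> < 1 * exp y"
    using assms by (intro mult_strict_right_mono) auto
  finally show ?thesis by simp
qed

lemma large_sample_of_kappa_bound_less_one:
  fixes t :: real and n d :: nat
  assumes d: "d \<ge> 1" and t: "0 < t" "t \<le> 1"
    and small: "1024 ^ (d + 1) * real d * (1 / t) ^ d * exp (- (1 / 1024) * t\<^sup>2 * real n) < 1"
  shows "d \<le> n" and "2 * exp (- real n * (t / 4)\<^sup>2 / 2) \<le> 1 / 2"
    and "(1 / t) ^ d < exp (t\<^sup>2 * real n / 1024)"
proof -
  define x where "x = t\<^sup>2 * real n"
  have "exp (- (1 / 1024) * t\<^sup>2 * real n) = exp (- (x / 1024))"
    by (simp add: x_def)
  note small = small[unfolded this]
  have inv_t: "1 \<le> (1 / t) ^ d"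
    using t by (simp add: one_le_power)
  have "1 * 1 \<le> 1024 ^ (d + 1) * real d"
    using d by (intro mult_mono one_le_power) auto
  then have K: "1 \<le> 1024 ^ (d + 1) * real d"
    by simp
  have "1024 ^ (d + 1) * 1 * 1 \<le> 1024 ^ (d + 1) * real d * (1 / t) ^ d"
    using d inv_t by (intro mult_mono mult_left_mono) auto
  then have "1024 ^ (d + 1) \<le> 1024 ^ (d + 1) * real d * (1 / t) ^ d"
    by simp
  then have "1024 ^ (d + 1) * exp (- (x / 1024)) \<le> 1024 ^ (d + 1) * real d * (1 / t) ^ d * exp (- (x / 1024))"
    by (rule mult_right_mono) simp
  then have "1024 ^ (d + 1) < exp (x / 1024)"
    using small by (intro less_exp_if_mult_exp_neg_less) linarith
  moreover have "exp (real (d + 1)) \<le> (1024::real) ^ (d + 1)"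
  proof -
    have "exp (real (d + 1)) = exp 1 ^ (d + 1)"
      by (metis exp_of_nat_mult mult.right_neutral)
    also have "\<dots> \<le> 1024 ^ (d + 1)"
      by (rule power_mono) (use exp_le in auto)
    finally show ?thesis .
  qed
  ultimately have "exp (real (d + 1)) < exp (x / 1024)"
    by linarith
  then have x_large: "1024 * real (d + 1) < x"
    by simp
  have "x \<le> real n"
    using t by (simp add: x_def power_le_one mult_left_le_one_le)
  then show "d \<le> n"
    using x_large by simp
  have "2048 \<le> 1024 * real (d + 1)"
    using d by simp
  then have "4 \<le> 1 + x / 32"
    using x_large by simp
  then have "4 \<le> exp (x / 32)"
    using exp_ge_add_one_self[of "x / 32"] by linarith
  moreover have "real n * (t / 4)\<^sup>2 / 2 = x / 32"
    by (simp add: x_def power_divide)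
  ultimately show "2 * exp (- real n * (t / 4)\<^sup>2 / 2) \<le> 1 / 2"
    by (simp add: exp_minus field_simps)
  have "(1 / t) ^ d \<le> 1024 ^ (d + 1) * real d * (1 / t) ^ d"
    using mult_right_mono[OF K, of "(1 / t) ^ d"] t by simp
  then have "(1 / t) ^ d * exp (- (x / 1024)) \<le> 1024 ^ (d + 1) * real d * (1 / t) ^ d * exp (- (x / 1024))"
    by (rule mult_right_mono) simp
  then have "(1 / t) ^ d * exp (- (x / 1024)) < 1"
    using small by linarith
  then show "(1 / t) ^ d < exp (t\<^sup>2 * real n / 1024)"
    unfolding x_def by (rule less_exp_if_mult_exp_neg_less)
qed

lemma vc_bound_le_kappa_bound:
  fixes t :: real and n d :: nat
  assumes d: "d \<ge> 1" and t: "0 < t" and inv_t_small: "(1 / t) ^ d < exp (t\<^sup>2 * real n / 1024)"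
  shows "8 * (exp 1 * real (2 * n) / real d) ^ d * exp (- real n * (t / 4)\<^sup>2 / 8)
           \<le> 1024 ^ (d + 1) * real d * (1 / t) ^ d * exp (- (1 / 1024) * t\<^sup>2 * real n)"
proof -
  define x where "x = t\<^sup>2 * real n"
  have exp_eq: "exp (- (1 / 1024) * t\<^sup>2 * real n) = exp (- (1 / 1024) * x)"
    by (simp add: x_def mult.assoc)
  have x: "x \<ge> 0"
    by (simp add: x_def)
  note inv_t_small = inv_t_small[folded x_def]
  have n_eq: "real n = x / t\<^sup>2"
    using t by (simp add: x_def)
  have base: "exp 1 * real (2 * n) / real d = 2 * exp 1 / (real d * t\<^sup>2) * x"
    using t by (simp add: n_eq field_simps)
  have split_exp: "exp (- real n * (t / 4)\<^sup>2 / 8) = exp (- (6 / 1024) * x) * exp (- (2 / 1024) * x)"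
    using t by (simp add: n_eq power_divide field_simps flip: exp_add)
  have "2 * exp 1 / (real d * t\<^sup>2) * (real d / (6 / 1024 * exp 1)) = 1024 / 3 * (1 / t * (1 / t))"
    using d t by (simp add: power2_eq_square field_simps)
  then have constants_eq: "(2 * exp 1 / (real d * t\<^sup>2)) ^ d * (real d / (6 / 1024 * exp 1)) ^ d
      = (1024 / 3) ^ d * ((1 / t) ^ d * (1 / t) ^ d)"
    by (simp flip: power_mult_distrib)
  \<comment> \<open>\<open>x ^ d\<close> is absorbed by \<open>exp (- 6 x / 1024)\<close>, and one of the two factors \<open>(1 / t) ^ d\<close> by \<open>exp (x / 1024)\<close>.\<close>
  have "8 * (exp 1 * real (2 * n) / real d) ^ d * exp (- real n * (t / 4)\<^sup>2 / 8)
      = 8 * ((2 * exp 1 / (real d * t\<^sup>2)) ^ d * (x ^ d * exp (- (6 / 1024) * x))) * exp (- (2 / 1024) * x)"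
    unfolding base split_exp power_mult_distrib by (simp only: ac_simps)
  also have "\<dots> \<le> 8 * ((2 * exp 1 / (real d * t\<^sup>2)) ^ d * (real d / (6 / 1024 * exp 1)) ^ d)
      * exp (- (2 / 1024) * x)"
    using x power_mult_exp_neg_le[of "6 / 1024" x d]
    by (intro mult_right_mono mult_left_mono) auto
  also have "\<dots> = 8 * (1024 / 3) ^ d * (1 / t) ^ d * ((1 / t) ^ d * exp (- (2 / 1024) * x))"
    unfolding constants_eq by (simp only: ac_simps)
  also have "\<dots> \<le> 8 * (1024 / 3) ^ d * (1 / t) ^ d * (exp (x / 1024) * exp (- (2 / 1024) * x))"
    using inv_t_small t by (intro mult_left_mono mult_right_mono) auto
  also have "\<dots> = 8 * (1024 / 3) ^ d * (1 / t) ^ d * exp (- (1 / 1024) * x)"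
    by (simp flip: exp_add)
  also have "\<dots> \<le> 1024 ^ (d + 1) * real d * (1 / t) ^ d * exp (- (1 / 1024) * x)"
  proof -
    have "(1024 / 3) ^ d \<le> (1024::real) ^ d"
      by (rule power_mono) auto
    then have "8 * (1024 / 3) ^ d \<le> 1024 * (1024::real) ^ d"
      using zero_le_power[of "1024::real" d] by linarith
    also have "\<dots> \<le> 1024 ^ (d + 1) * real d"
      using d by simp
    finally show ?thesis
      using t by (intro mult_right_mono) auto
  qed
  finally show "8 * (exp 1 * real (2 * n) / real d) ^ d * exp (- real n * (t / 4)\<^sup>2 / 8)
           \<le> 1024 ^ (d + 1) * real d * (1 / t) ^ d * exp (- (1 / 1024) * t\<^sup>2 * real n)"
    unfolding exp_eq .
qed

lemma outer_prob_err_le_kappa_bound: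
  fixes \<xi> \<epsilon> :: real
  defines "t \<equiv> \<xi> * \<epsilon> / (1 + \<epsilon>)"
  assumes chi: "prob_space chi" and sets: "sets chi = sets (cube_measure db)" and m: "m < db"
    and db: "db \<ge> 1" and n: "n > 0" and \<xi>: "0 < \<xi>" "\<xi> \<le> 1" and \<epsilon>: "\<epsilon> > 0"
    and small: "1024 ^ (2 * db + 1) * real (2 * db) * (1 / t) ^ (2 * db) * exp (- (1 / 1024) * t\<^sup>2 * real n) < 1"
  shows "outer_prob_le (db_measure n chi)
    {D \<in> space (db_measure n chi). ereal \<epsilon> \<le> (SUP q\<in>queries_xi db n chi \<xi>. ereal (err db m n chi D q))}
    (1024 ^ (2 * db + 1) * real (2 * db) * (1 / t) ^ (2 * db) * exp (- (1 / 1024) * t\<^sup>2 * real n))"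
proof -
  have "\<xi> * \<epsilon> \<le> 1 + \<epsilon>"
    using mult_right_mono[OF \<xi>(2), of \<epsilon>] \<epsilon> by linarith
  then have t: "0 < t" "t \<le> 1"
    using \<xi> \<epsilon> by (simp_all add: t_def)
  have d: "2 * db \<ge> 1"
    using db by simp
  note large = large_sample_of_kappa_bound_less_one[OF d t small]
  have "outer_prob_le (db_measure n chi)
    {D \<in> space (db_measure n chi). ereal \<epsilon> \<le> (SUP q\<in>queries_xi db n chi \<xi>. ereal (err db m n chi D q))}
    (8 * (exp 1 * real (2 * n) / real (2 * db)) ^ (2 * db) * exp (- real n * (t / 4)\<^sup>2 / 8))"
    using outer_prob_err_le[OF chi sets m db n _ \<xi>(1) \<epsilon>] large(1,2) by (simp add: t_def)
  then show ?thesis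
    by (rule outer_prob_le_mono) (rule vc_bound_le_kappa_bound[OF d t(1) large(3)])
qed

lemma outer_prob_le_space:
  assumes "prob_space M" and "1 \<le> b"
  shows "outer_prob_le M {x \<in> space M. P x} b"
  using assms prob_space.prob_space[OF assms(1)]
  unfolding outer_prob_le_def by (intro bexI[of _ "space M"]) auto

theorem lemma3p6:
  shows "\<exists>\<kappa>::real. \<kappa> > 0 \<and>
    (\<forall>(db::nat) (n::nat) (m::nat) (chi::point measure) (xi::real) (\<epsilon>::real).
       db \<ge> 1 \<longrightarrow> m < db \<longrightarrow>
       prob_space chi \<longrightarrow>
       sets chi = sets (PiM {..<db} (\<lambda>_. restrict_space borel {0..1::real})) \<longrightarrow>
       0 < xi \<longrightarrow> xi \<le> 1 \<longrightarrow> \<epsilon> > 0 \<longrightarrow>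
       (let d = 2 * db in
        outer_prob_le (db_measure n chi)
          {D \<in> space (db_measure n chi).
             (SUP q\<in>queries_xi db n chi xi. ereal (err db m n chi D q)) \<ge> ereal \<epsilon>}
          (\<kappa> ^ (d + 1) * real d * ((1 + \<epsilon>) / (xi * \<epsilon>)) ^ d
             * exp (- (1 / \<kappa>) * ((xi * \<epsilon>) / (1 + \<epsilon>))\<^sup>2 * real n))))"
proof (intro exI[of _ "1024::real"] conjI allI impI)
  fix db n m :: nat and chi :: "point measure" and xi \<epsilon> :: real
  assume db: "db \<ge> 1" and m: "m < db" and chi: "prob_space chi"
    and sets: "sets chi = sets (PiM {..<db} (\<lambda>_. restrict_space borel {0..1::real}))"
    and xi: "0 < xi" "xi \<le> 1" and \<epsilon>: "\<epsilon> > 0"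
  define t where "t = xi * \<epsilon> / (1 + \<epsilon>)"
  let ?E = "{D \<in> space (db_measure n chi).
    ereal \<epsilon> \<le> (SUP q\<in>queries_xi db n chi xi. ereal (err db m n chi D q))}"
  let ?R = "1024 ^ (2 * db + 1) * real (2 * db) * (1 / t) ^ (2 * db) * exp (- (1 / 1024) * t\<^sup>2 * real n)"
  have "outer_prob_le (db_measure n chi) ?E ?R"
  proof (cases "n = 0")
    case True
    then have "?E = {}"
      using xi by (simp add: queries_xi_def bot_ereal_def)
    then show ?thesis
      using xi \<epsilon> by (auto simp: outer_prob_le_def t_def intro!: bexI[of _ "{}"])
  next
    case False
    have "prob_space (db_measure n chi)"
      unfolding db_measure_def using chi by (intro prob_space_PiM) auto
    then show ?thesis
      using outer_prob_err_le_kappa_bound[OF chi _ m db _ xi \<epsilon>] False sets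
      by (cases "?R < 1") (simp_all add: outer_prob_le_space cube_measure_def t_def)
  qed
  moreover have "(1 + \<epsilon>) / (xi * \<epsilon>) = 1 / t" and "(xi * \<epsilon>) / (1 + \<epsilon>) = t"
    by (simp_all add: t_def)
  ultimately show "let d = 2 * db in
    outer_prob_le (db_measure n chi) {D \<in> space (db_measure n chi).
       (SUP q\<in>queries_xi db n chi xi. ereal (err db m n chi D q)) \<ge> ereal \<epsilon>}
      (1024 ^ (d + 1) * real d * ((1 + \<epsilon>) / (xi * \<epsilon>)) ^ d
        * exp (- (1 / 1024) * ((xi * \<epsilon>) / (1 + \<epsilon>))\<^sup>2 * real n))"
    by (simp only: Let_def)
qed simp

end
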